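(* Let $P,P'$ be polytopes with face posets $L,L'$ respectively. Suppose $\dim(P)\ge\dim(P')$ and that $\phi:L\to L'$ is a map satisfying $\phi(x)\le\phi(y)$ if and only if $x\le y$, for all $x,y\in L$. Then $\phi$ is an isomorphism of posets, i.e. a combinatorial equivalence between $P$ and $P'$.
   Context: Here the face poset of a polytope means the poset of its nonempty proper faces ordered by inclusion (whose order complex is the barycentric subdivision of the boundary complex). *)

theory Defs
  imports "HOL-Analysis.Analysis"
begin

definition face_poset :: "'a::euclidean_space set \<Rightarrow> 'a set set" where
  "face_poset P = {F. F face_of P \<and> F \<noteq> {} \<and> F \<noteq> P}"

end

theory Submission
  imports Defs
begin

text \<open>
  Induction on \<open>dim P\<close>; polytopes of dimension at most 1 are handled directly. If
  \<open>dim P \<ge> 2\<close>, then \<open>\<phi>\<close> restricts, for every facet \<open>F\<close> of \<open>P\<close>, to an order embedding of the face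
  poset of \<open>F\<close> into that of the proper face \<open>\<phi> F\<close> of \<open>P'\<close>, which by induction is a
  dimension-preserving isomorphism. Hence \<open>\<phi>\<close> maps facets to facets and \<open>dim P' = dim P\<close>.
  The image of the facets is closed under adjacency along ridges: a ridge \<open>R\<close> of \<open>\<phi> F\<close> is
  the image of a ridge \<open>r\<close> of \<open>F\<close>, which lies in a second facet \<open>F'\<close> of \<open>P\<close>, and a ridge lies
  in only two facets, namely \<open>\<phi> F\<close> and \<open>\<phi> F'\<close>. As the facets of a polytope of dimension
  \<open>\<ge> 2\<close> are connected through ridges, every facet of \<open>P'\<close> is an image, and surjectivity on
  the remaining faces follows facet by facet.
\<close>

lemma rel_interior_avoids_affine_hulls:
  fixes S :: "'a::euclidean_space set"
  assumes "finite \<A>" "convex S" "S \<noteq> {}" "\<And>A. A \<in> \<A> \<Longrightarrow> aff_dim A < aff_dim S"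
  obtains x where "x \<in> rel_interior S" "\<And>A. A \<in> \<A> \<Longrightarrow> x \<notin> affine hull A"
proof -
  have "\<exists>x\<in>rel_interior S. \<forall>A\<in>\<A>. x \<notin> affine hull A"
    using assms
  proof (induction \<A> arbitrary: S rule: finite_induct)
    case empty
    then show ?case
      by (simp add: ex_in_conv rel_interior_eq_empty)
  next
    case (insert T \<A>)
    have convex: "convex (rel_interior S)" and dim: "aff_dim (rel_interior S) = aff_dim S"
      using insert.prems(1) by (simp_all add: convex_rel_interior rel_interior_aff_dim)
    have "rel_interior S \<noteq> {}"
      using insert.prems(1,2) by (simp add: rel_interior_eq_empty)
    have "closure (rel_interior S - affine hull T) = closure (rel_interior S)"
      using insert.prems(3) dim by (intro dense_complement_convex[OF _ convex]) simp
    then have "rel_interior S - affine hull T \<noteq> {}"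
      using \<open>rel_interior S \<noteq> {}\<close> by (metis closure_empty closure_eq_empty)
    then obtain x where x: "x \<in> rel_interior S" "x \<notin> affine hull T"
      by blast
    have "open (- (affine hull T))"
      by blast
    then obtain e where "e > 0" "ball x e \<subseteq> - (affine hull T)"
      using x(2) open_contains_ball by blast
    define S' where "S' = rel_interior S \<inter> ball x e"
    have "convex S'" "S' \<noteq> {}"
      using convex x(1) \<open>e > 0\<close> by (auto simp: S'_def convex_Int)
    moreover have "aff_dim S' = aff_dim S"
      using aff_dim_convex_Int_open[OF convex open_ball] \<open>S' \<noteq> {}\<close> dim by (simp add: S'_def)
    ultimately obtain z where z: "z \<in> rel_interior S'" "\<forall>A\<in>\<A>. z \<notin> affine hull A"
      using insert.IH[of S'] insert.prems(3) by auto
    have "z \<in> S'"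
      using z(1) rel_interior_subset by blast
    then show ?case
      using z(2) \<open>ball x e \<subseteq> - (affine hull T)\<close> by (auto simp: S'_def)
  qed
  then show ?thesis
    using that by blast
qed

lemma affine_hull_insert_exchange:
  fixes c y :: "'a::euclidean_space"
  assumes "y \<in> affine hull (insert c S)" "y \<notin> affine hull S"
  shows "c \<in> affine hull (insert y S)"
proof -
  have sub: "affine hull (insert y S) \<subseteq> affine hull (insert c S)"
    using assms(1) by (intro hull_minimal) (auto intro: hull_inc)
  moreover have "aff_dim (insert c S) \<le> aff_dim (insert y S)"
    using assms(2) by (simp add: aff_dim_insert)
  moreover have "aff_dim (insert y S) \<le> aff_dim (insert c S)"
    using aff_dim_subset[OF sub] by simp
  ultimately have "affine hull (insert y S) = affine hull (insert c S)"
    by (intro affine_dim_equal) auto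
  then show ?thesis
    by (simp add: hull_inc)
qed

lemma affine_hull_3_disjoint:
  fixes c p q :: "'a::euclidean_space"
  assumes "p \<notin> affine hull K" "q \<notin> affine hull (insert p K)"
    and "c \<notin> affine hull (insert p (insert q K))"
  shows "K \<inter> affine hull {c, p, q} = {}"
proof (rule ccontr)
  assume "K \<inter> affine hull {c, p, q} \<noteq> {}"
  then obtain y where y: "y \<in> K" "y \<in> affine hull {c, p, q}"
    by blast
  have "y \<in> affine hull {q, p}"
  proof (rule ccontr)
    assume "y \<notin> affine hull {q, p}"
    then have "c \<in> affine hull (insert y {p, q})"
      using y(2) affine_hull_insert_exchange by (metis insert_commute)
    moreover have "affine hull (insert y {p, q}) \<subseteq> affine hull (insert p (insert q K))"
      using y(1) by (intro hull_mono) auto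
    ultimately show False
      using assms(3) by blast
  qed
  moreover have "y \<notin> affine hull {p}"
    using y(1) assms(1) hull_inc by fastforce
  ultimately have "q \<in> affine hull (insert y {p})"
    by (rule affine_hull_insert_exchange)
  moreover have "affine hull (insert y {p}) \<subseteq> affine hull (insert p K)"
    using y(1) by (intro hull_mono) auto
  ultimately show False
    using assms(2) by blast
qed

lemma facet_of_subset_eq:
  fixes S :: "'a::euclidean_space set"
  assumes "F facet_of S" "G facet_of S" "F \<subseteq> G"
  shows "F = G"
proof (rule ccontr)
  assume "F \<noteq> G"
  have "F face_of G"
    using assms face_of_subset facet_of_imp_face_of facet_of_imp_subset by blast
  then have "aff_dim F < aff_dim G"
    using face_of_aff_dim_lt \<open>F \<noteq> G\<close> assms(2) face_of_imp_convex facet_of_imp_face_of by blast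
  then show False
    using assms unfolding facet_of_def by simp
qed

lemma aff_dim_Int_facets_lt:
  fixes S :: "'a::euclidean_space set"
  assumes "F facet_of S" "G facet_of S" "F \<noteq> G"
  shows "aff_dim (F \<inter> G) < aff_dim S - 1"
proof -
  have "F \<inter> G face_of S"
    using assms face_of_Int facet_of_imp_face_of by blast
  then have "F \<inter> G face_of F"
    using face_of_subset facet_of_imp_subset[OF assms(1)] by blast
  moreover have "F \<inter> G \<noteq> F"
    using assms facet_of_subset_eq by blast
  ultimately have "aff_dim (F \<inter> G) < aff_dim F"
    using assms(1) face_of_aff_dim_lt face_of_imp_convex facet_of_imp_face_of by blast
  then show ?thesis
    using assms(1) unfolding facet_of_def by simp
qed

lemma dim_linear_image_le_add:
  fixes g :: "'a::euclidean_space \<Rightarrow> 'b::euclidean_space"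
  assumes "linear g" "W \<subseteq> V"
  shows "dim (g ` V) \<le> dim (g ` W) + (dim V - dim W)"
  using assms(2)
proof (induction "dim V - dim W" arbitrary: W rule: less_induct)
  case less
  show ?case
  proof (cases "V \<subseteq> span W")
    case True
    then have "g ` V \<subseteq> g ` span W"
      by (rule image_mono)
    also have "\<dots> = span (g ` W)"
      by (rule span_linear_image[symmetric, OF assms(1)])
    finally show ?thesis
      using dim_mono[of "g ` V" "g ` W"] by simp
  next
    case False
    then obtain u where u: "u \<in> V" "u \<notin> span W"
      by blast
    have sub: "insert u W \<subseteq> V"
      using u(1) less.prems by blast
    have dim_insert_u: "dim (insert u W) = dim W + 1"
      using u(2) by (simp add: dim_insert)
    moreover have "dim (insert u W) \<le> dim V"
      using sub span_superset by (intro dim_mono) blast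
    moreover have "dim (g ` V) \<le> dim (g ` insert u W) + (dim V - dim (insert u W))"
      using less.hyps[OF _ sub] dim_insert_u calculation by linarith
    moreover have "dim (g ` insert u W) \<le> dim (g ` W) + 1"
      by (simp add: dim_insert)
    ultimately show ?thesis
      by linarith
  qed
qed

lemma three_affine_functions_dependent:
  fixes S R :: "'a::euclidean_space set"
  assumes "R \<subseteq> S" "R \<noteq> {}" "aff_dim S \<le> aff_dim R + 2"
    and "R \<subseteq> {x. a1 \<bullet> x = b1}" "R \<subseteq> {x. a2 \<bullet> x = b2}" "R \<subseteq> {x. a3 \<bullet> x = b3}"
  obtains l1 l2 l3 where "(l1, l2, l3) \<noteq> 0"
    "\<And>x. x \<in> S \<Longrightarrow> l1 * (a1 \<bullet> x - b1) + l2 * (a2 \<bullet> x - b2) + l3 * (a3 \<bullet> x - b3) = 0"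
proof -
  obtain y where y: "y \<in> R"
    using assms(2) by blast
  define g where "g x = (a1 \<bullet> x, a2 \<bullet> x, a3 \<bullet> x)" for x
  define V where "V = (\<lambda>x. x - y) ` S"
  define W where "W = (\<lambda>x. x - y) ` R"
  have "linear g"
    unfolding g_def by (intro linearI) (auto simp: inner_add_right)
  have g_shift: "g (x - y) = (a1 \<bullet> x - b1, a2 \<bullet> x - b2, a3 \<bullet> x - b3)" for x
    using y assms(4-6) by (auto simp: g_def inner_diff_right)
  have "g ` W \<subseteq> {0}"
    using assms(4-6) g_shift by (auto simp: W_def zero_prod_def)
  then have "dim (g ` W) = 0"
    by simp
  moreover have "dim V \<le> dim W + 2"
    using assms(3) aff_dim_eq_dim_subtract[of y S] aff_dim_eq_dim_subtract[of y R] y assms(1)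
    by (auto simp: V_def W_def hull_inc)
  moreover have "W \<subseteq> V"
    using assms(1) by (auto simp: V_def W_def)
  ultimately have "dim (g ` V) \<le> 2"
    using dim_linear_image_le_add[OF \<open>linear g\<close>, of W V] by linarith
  then have "dim (g ` V) < dim (UNIV :: (real \<times> real \<times> real) set)"
    by simp
  then have "span (g ` V) \<subset> span UNIV"
    by (metis dim_span less_irrefl psubsetI span_mono subset_UNIV)
  then obtain l where "l \<noteq> 0" and l: "\<And>z. z \<in> span (g ` V) \<Longrightarrow> orthogonal l z"
    using orthogonal_to_subspace_exists_gen by metis
  obtain l1 l2 l3 where l123: "l = (l1, l2, l3)"
    by (cases l) auto
  show thesis
  proof (rule that)
    show "(l1, l2, l3) \<noteq> 0"
      using \<open>l \<noteq> 0\<close> l123 by simp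
    fix x assume "x \<in> S"
    then have "orthogonal l (g (x - y))"
      by (intro l span_base) (auto simp: V_def)
    then show "l1 * (a1 \<bullet> x - b1) + l2 * (a2 \<bullet> x - b2) + l3 * (a3 \<bullet> x - b3) = 0"
      by (simp add: g_shift l123 orthogonal_def)
  qed
qed

lemma combination_eq_zero_imp_opposite_signs:
  fixes a b lj lk :: real
  assumes "lj * a + lk * b = 0" "a < 0" "b \<le> 0" "lj \<noteq> 0"
  shows "lj * lk < 0"
proof -
  have "lj * (lj * a + lk * b) = 0"
    using assms(1) by simp
  then have "(lj * lk) * b = - (lj * lj) * a"
    by (simp add: algebra_simps eq_neg_iff_add_eq_0)
  also have "\<dots> > 0"
    using assms(2,4) by (auto simp: mult_less_0_iff zero_less_mult_iff)
  finally show ?thesis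
    using assms(3) by (simp add: zero_less_mult_iff)
qed

lemma nonpos_functions_incomparable_zero_sets_independent:
  fixes f1 f2 f3 :: "'a \<Rightarrow> real"
  assumes rel: "\<And>x. x \<in> Q \<Longrightarrow> l1 * f1 x + l2 * f2 x + l3 * f3 x = 0"
    and nonpos: "\<And>x. x \<in> Q \<Longrightarrow> f1 x \<le> 0 \<and> f2 x \<le> 0 \<and> f3 x \<le> 0"
    and "\<exists>x\<in>Q. f1 x = 0 \<and> f2 x < 0" "\<exists>x\<in>Q. f1 x = 0 \<and> f3 x < 0"
    and "\<exists>x\<in>Q. f2 x = 0 \<and> f1 x < 0" "\<exists>x\<in>Q. f2 x = 0 \<and> f3 x < 0"
    and "\<exists>x\<in>Q. f3 x = 0 \<and> f1 x < 0" "\<exists>x\<in>Q. f3 x = 0 \<and> f2 x < 0"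
  shows "l1 = 0 \<and> l2 = 0 \<and> l3 = 0"
proof -
  \<comment> \<open>Evaluating at a zero of one function shows that the other two coefficients have
    opposite signs, unless both vanish; three numbers cannot pairwise have opposite signs.\<close>
  have "l2 \<noteq> 0 \<longrightarrow> l2 * l3 < 0"
    using assms(3) rel nonpos by (force intro: combination_eq_zero_imp_opposite_signs)
  moreover have "l3 \<noteq> 0 \<longrightarrow> l3 * l2 < 0"
    using assms(4) rel nonpos by (force intro: combination_eq_zero_imp_opposite_signs)
  moreover have "l1 \<noteq> 0 \<longrightarrow> l1 * l3 < 0"
    using assms(5) rel nonpos by (force intro: combination_eq_zero_imp_opposite_signs)
  moreover have "l3 \<noteq> 0 \<longrightarrow> l3 * l1 < 0"
    using assms(6) rel nonpos by (force intro: combination_eq_zero_imp_opposite_signs)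
  moreover have "l1 \<noteq> 0 \<longrightarrow> l1 * l2 < 0"
    using assms(7) rel nonpos by (force intro: combination_eq_zero_imp_opposite_signs)
  moreover have "l2 \<noteq> 0 \<longrightarrow> l2 * l1 < 0"
    using assms(8) rel nonpos by (force intro: combination_eq_zero_imp_opposite_signs)
  ultimately show ?thesis
    by (auto simp: mult_less_0_iff)
qed

text \<open>
  The three facet inequalities vanish on \<open>R\<close>, which has codimension 2 in \<open>Q\<close>, so they are
  linearly dependent on \<open>Q\<close>; but the zero sets on \<open>Q\<close> of distinct facet inequalities are
  incomparable.
\<close>
lemma ridge_in_at_most_two_facets:
  fixes Q :: "'a::euclidean_space set"
  assumes Q: "polyhedron Q" and R: "R \<noteq> {}" "aff_dim R = aff_dim Q - 2"
    and G: "G1 facet_of Q" "G2 facet_of Q" "G3 facet_of Q" "R \<subseteq> G1" "R \<subseteq> G2" "R \<subseteq> G3"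
  shows "G1 = G2 \<or> G1 = G3 \<or> G2 = G3"
proof (rule ccontr)
  assume distinct: "\<not> (G1 = G2 \<or> G1 = G3 \<or> G2 = G3)"
  obtain a1 b1 where a1: "Q \<subseteq> {x. a1 \<bullet> x \<le> b1}" "G1 = Q \<inter> {x. a1 \<bullet> x = b1}"
    using facet_of_polyhedron[OF Q G(1)] by metis
  obtain a2 b2 where a2: "Q \<subseteq> {x. a2 \<bullet> x \<le> b2}" "G2 = Q \<inter> {x. a2 \<bullet> x = b2}"
    using facet_of_polyhedron[OF Q G(2)] by metis
  obtain a3 b3 where a3: "Q \<subseteq> {x. a3 \<bullet> x \<le> b3}" "G3 = Q \<inter> {x. a3 \<bullet> x = b3}"
    using facet_of_polyhedron[OF Q G(3)] by metis
  have "R \<subseteq> Q"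
    using G(4) facet_of_imp_subset[OF G(1)] by (rule order_trans)
  moreover have "aff_dim Q \<le> aff_dim R + 2"
    using R(2) by linarith
  moreover have "R \<subseteq> {x. a1 \<bullet> x = b1}" "R \<subseteq> {x. a2 \<bullet> x = b2}" "R \<subseteq> {x. a3 \<bullet> x = b3}"
    using G(4-6) a1(2) a2(2) a3(2) by blast+
  ultimately obtain l1 l2 l3 where "(l1, l2, l3) \<noteq> 0"
    and rel: "\<And>x. x \<in> Q \<Longrightarrow> l1 * (a1 \<bullet> x - b1) + l2 * (a2 \<bullet> x - b2) + l3 * (a3 \<bullet> x - b3) = 0"
    using three_affine_functions_dependent[OF _ R(1)] by metis
  have witness: "\<exists>x\<in>Q. ai \<bullet> x - bi = 0 \<and> aj \<bullet> x - bj < 0"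
    if facets: "Gi facet_of Q" "Gj facet_of Q" "Gi \<noteq> Gj"
      and eqs: "Gi = Q \<inter> {x. ai \<bullet> x = bi}" "Q \<subseteq> {x. aj \<bullet> x \<le> bj}" "Gj = Q \<inter> {x. aj \<bullet> x = bj}"
    for Gi Gj ai bi aj bj
  proof -
    obtain x where "x \<in> Gi" "x \<notin> Gj"
      using facets facet_of_subset_eq by blast
    then have "x \<in> Q" "ai \<bullet> x = bi" "aj \<bullet> x \<noteq> bj"
      using eqs(1,3) by blast+
    moreover have "aj \<bullet> x \<le> bj"
      using eqs(2) \<open>x \<in> Q\<close> by blast
    ultimately show ?thesis
      by (intro bexI[of _ x]) simp_all
  qed
  have nonpos: "a1 \<bullet> x - b1 \<le> 0 \<and> a2 \<bullet> x - b2 \<le> 0 \<and> a3 \<bullet> x - b3 \<le> 0" if "x \<in> Q" for x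
    using that a1(1) a2(1) a3(1) by auto
  have "l1 = 0 \<and> l2 = 0 \<and> l3 = 0"
  proof (rule nonpos_functions_incomparable_zero_sets_independent[of Q, OF rel nonpos])
    show "\<exists>x\<in>Q. a1 \<bullet> x - b1 = 0 \<and> a2 \<bullet> x - b2 < 0"
      using distinct by (intro witness[OF G(1,2) _ a1(2) a2]) simp
    show "\<exists>x\<in>Q. a1 \<bullet> x - b1 = 0 \<and> a3 \<bullet> x - b3 < 0"
      using distinct by (intro witness[OF G(1,3) _ a1(2) a3]) simp
    show "\<exists>x\<in>Q. a2 \<bullet> x - b2 = 0 \<and> a1 \<bullet> x - b1 < 0"
      using distinct by (intro witness[OF G(2,1) _ a2(2) a1]) auto
    show "\<exists>x\<in>Q. a2 \<bullet> x - b2 = 0 \<and> a3 \<bullet> x - b3 < 0"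
      using distinct by (intro witness[OF G(2,3) _ a2(2) a3]) simp
    show "\<exists>x\<in>Q. a3 \<bullet> x - b3 = 0 \<and> a1 \<bullet> x - b1 < 0"
      using distinct by (intro witness[OF G(3,1) _ a3(2) a1]) auto
    show "\<exists>x\<in>Q. a3 \<bullet> x - b3 = 0 \<and> a2 \<bullet> x - b2 < 0"
      using distinct by (intro witness[OF G(3,2) _ a3(2) a2]) auto
  qed
  then show False
    using \<open>(l1, l2, l3) \<noteq> 0\<close> by (simp add: zero_prod_def)
qed

lemma connected_rel_frontier_Int_affine:
  fixes S L :: "'a::euclidean_space set"
  assumes "convex S" "bounded S" "affine L" "rel_interior S \<inter> L \<noteq> {}" "2 \<le> aff_dim (S \<inter> L)"
  shows "connected (rel_frontier S \<inter> L)"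
proof -
  have "rel_frontier (S \<inter> L) = rel_frontier S \<inter> L"
    using convex_affine_rel_interior_Int[OF assms(1,3,4)] convex_affine_closure_Int[OF assms(1,3,4)]
    by (auto simp: rel_frontier_def)
  moreover have "connected (rel_frontier (S \<inter> L))"
    using assms by (intro connected_sphere_gen) (auto simp: convex_Int affine_imp_convex bounded_Int)
  ultimately show ?thesis
    by simp
qed

lemma polytope_generic_plane_section:
  fixes Q :: "'a::euclidean_space set"
  assumes Q: "polytope Q" "2 \<le> aff_dim Q" and F: "F facet_of Q" and G: "G facet_of Q"
  obtains L where "connected (rel_frontier Q \<inter> L)" "F \<inter> L \<noteq> {}" "G \<inter> L \<noteq> {}"
    "\<And>K. K face_of Q \<Longrightarrow> aff_dim K \<le> aff_dim Q - 3 \<Longrightarrow> K \<inter> L = {}"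
proof -
  define Ks where "Ks = {K. K face_of Q \<and> aff_dim K \<le> aff_dim Q - 3}"
  have "finite Ks"
    using finite_polytope_faces[OF Q(1)] by (rule finite_subset[rotated]) (auto simp: Ks_def)
  have "{} \<in> Ks"
    using Q(2) by (simp add: Ks_def)
  have insert_le: "aff_dim (insert a S) \<le> aff_dim S + 1" for a :: 'a and S
    by (simp add: aff_dim_insert)
  have facet: "convex H" "H \<noteq> {}" "aff_dim H = aff_dim Q - 1" if "H facet_of Q" for H
    using that by (auto simp: facet_of_def face_of_imp_convex)
  \<comment> \<open>As \<open>{} \<in> Ks\<close>, the points \<open>p\<close>, \<open>q\<close>, \<open>c\<close> chosen below are also affinely independent.\<close>
  obtain p where p: "p \<in> rel_interior F" "\<And>K. K \<in> Ks \<Longrightarrow> p \<notin> affine hull K"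
    by (rule rel_interior_avoids_affine_hulls[of Ks F])
      (use \<open>finite Ks\<close> facet[OF F] in \<open>auto simp: Ks_def\<close>)
  obtain q where q: "q \<in> rel_interior G" "\<And>K. K \<in> Ks \<Longrightarrow> q \<notin> affine hull (insert p K)"
  proof (rule rel_interior_avoids_affine_hulls[of "insert p ` Ks" G])
    fix A assume "A \<in> insert p ` Ks"
    then obtain K where "K \<in> Ks" "A = insert p K"
      by blast
    then show "aff_dim A < aff_dim G"
      using facet(3)[OF G] insert_le[of p K] by (simp add: Ks_def)
  qed (use \<open>finite Ks\<close> facet[OF G] in auto)
  obtain c where c: "c \<in> rel_interior Q" "\<And>K. K \<in> Ks \<Longrightarrow> c \<notin> affine hull (insert p (insert q K))"
  proof (rule rel_interior_avoids_affine_hulls[of "(\<lambda>K. insert p (insert q K)) ` Ks" Q])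
    show "convex Q" "Q \<noteq> {}"
      using Q(1) F polytope_imp_convex facet(2)[OF F] facet_of_imp_subset by blast+
    fix A assume "A \<in> (\<lambda>K. insert p (insert q K)) ` Ks"
    then obtain K where "K \<in> Ks" "A = insert p (insert q K)"
      by blast
    then show "aff_dim A < aff_dim Q"
      using insert_le[of p "insert q K"] insert_le[of q K] by (simp add: Ks_def)
  qed (use \<open>finite Ks\<close> in auto)
  define L where "L = affine hull {c, p, q}"
  have "p \<in> F" "q \<in> G" "c \<in> Q"
    using p(1) q(1) c(1) rel_interior_subset by blast+
  then have "{c, p, q} \<subseteq> Q \<inter> L"
    using F G facet_of_imp_subset by (auto simp: L_def hull_inc)
  moreover have "q \<notin> affine hull {p}" "c \<notin> affine hull {p, q}"
    using q(2)[OF \<open>{} \<in> Ks\<close>] c(2)[OF \<open>{} \<in> Ks\<close>] by simp_all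
  then have "aff_dim {c, p, q} = 2"
    by (auto simp: aff_dim_insert)
  ultimately have "2 \<le> aff_dim (Q \<inter> L)"
    using aff_dim_subset by metis
  then have "connected (rel_frontier Q \<inter> L)"
    using c(1) Q(1) by (intro connected_rel_frontier_Int_affine)
      (auto simp: L_def hull_inc polytope_imp_convex polytope_imp_bounded)
  moreover have "F \<inter> L \<noteq> {}" "G \<inter> L \<noteq> {}"
    using \<open>p \<in> F\<close> \<open>q \<in> G\<close> by (auto simp: L_def hull_inc)
  moreover have "K \<inter> L = {}" if "K face_of Q" "aff_dim K \<le> aff_dim Q - 3" for K
    unfolding L_def using that p(2) q(2) c(2)
    by (intro affine_hull_3_disjoint) (auto simp: Ks_def)
  ultimately show thesis
    using that by blast
qed

lemma connected_subset_rel_frontier_meets_Int_facets: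
  fixes Q :: "'a::euclidean_space set"
  assumes Q: "polytope Q" and S: "S \<subseteq> {F. F facet_of Q}"
    and C: "connected C" "C \<subseteq> rel_frontier Q"
    and F: "F \<in> S" "F \<inter> C \<noteq> {}" and G: "G facet_of Q" "G \<notin> S" "G \<inter> C \<noteq> {}"
  obtains F' G' where "F' \<in> S" "G' facet_of Q" "G' \<notin> S" "F' \<inter> G' \<inter> C \<noteq> {}"
proof -
  define A where "A = \<Union>S"
  define B where "B = \<Union>({F. F facet_of Q} - S)"
  have facets_closed: "closed H" if "H facet_of Q" for H
    using that Q face_of_polytope_polytope facet_of_imp_face_of polytope_imp_closed by blast
  have finite: "finite {F. F facet_of Q}"
    using finite_polytope_facets[OF Q] by simp
  have "closed A"
    unfolding A_def using finite_subset[OF S finite] S facets_closed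
    by (intro closed_Union) auto
  moreover have "closed B"
    unfolding B_def using finite facets_closed by (intro closed_Union) auto
  moreover have "C \<subseteq> A \<union> B"
    using C(2) S unfolding rel_frontier_of_polyhedron[OF polytope_imp_polyhedron[OF Q]] A_def B_def
    by blast
  moreover have "A \<inter> C \<noteq> {}" "B \<inter> C \<noteq> {}"
    using F G by (auto simp: A_def B_def)
  ultimately have "A \<inter> B \<inter> C \<noteq> {}"
    using connected_closedD[OF C(1)] by blast
  then show thesis
    using that by (auto simp: A_def B_def)
qed

text \<open>
  The boundary of a generic plane section is connected; if it met facets both in and outside
  \<open>S\<close>, it would meet some \<open>F \<inter> G\<close> with \<open>F \<in> S\<close> and \<open>G \<notin> S\<close>. Not being a ridge, that face has
  codimension \<open>\<ge> 3\<close>, and such faces are missed by the section.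
\<close>
lemma facets_ridge_connected:
  fixes Q :: "'a::euclidean_space set"
  assumes Q: "polytope Q" "2 \<le> aff_dim Q"
    and S: "S \<subseteq> {F. F facet_of Q}" "S \<noteq> {}"
    and ridge_closed: "\<And>F G. F \<in> S \<Longrightarrow> G facet_of Q \<Longrightarrow> aff_dim (F \<inter> G) = aff_dim Q - 2 \<Longrightarrow> G \<in> S"
  shows "S = {F. F facet_of Q}"
proof (rule ccontr)
  assume "S \<noteq> {F. F facet_of Q}"
  then obtain G where G: "G facet_of Q" "G \<notin> S"
    using S(1) by blast
  obtain F where "F \<in> S"
    using S(2) by blast
  then have F: "F facet_of Q"
    using S(1) by blast
  obtain L where L: "connected (rel_frontier Q \<inter> L)" "F \<inter> L \<noteq> {}" "G \<inter> L \<noteq> {}"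
    and avoid: "\<And>K. K face_of Q \<Longrightarrow> aff_dim K \<le> aff_dim Q - 3 \<Longrightarrow> K \<inter> L = {}"
    by (rule polytope_generic_plane_section[OF Q F G(1)]) (rule that)
  have "F \<inter> (rel_frontier Q \<inter> L) \<noteq> {}" "G \<inter> (rel_frontier Q \<inter> L) \<noteq> {}"
    using L(2,3) F G(1) facet_of_imp_face_of facet_of_irrefl face_of_subset_rel_frontier
    by blast+
  then obtain F' G' where "F' \<in> S" "G' facet_of Q" "G' \<notin> S" "F' \<inter> G' \<inter> (rel_frontier Q \<inter> L) \<noteq> {}"
    using connected_subset_rel_frontier_meets_Int_facets[OF Q(1) S(1) L(1) _ \<open>F \<in> S\<close> _ G]
    by blast
  moreover from this have "F' facet_of Q" "F' \<noteq> G'"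
    using S(1) by auto
  ultimately have "aff_dim (F' \<inter> G') \<le> aff_dim Q - 3"
    using aff_dim_Int_facets_lt ridge_closed by fastforce
  moreover have "F' \<inter> G' face_of Q"
    using \<open>F' facet_of Q\<close> \<open>G' facet_of Q\<close> face_of_Int facet_of_imp_face_of by blast
  ultimately show False
    using avoid \<open>F' \<inter> G' \<inter> (rel_frontier Q \<inter> L) \<noteq> {}\<close> by blast
qed

definition face_order_embedding ::
    "('a::euclidean_space set \<Rightarrow> 'b::euclidean_space set) \<Rightarrow> 'a set \<Rightarrow> 'b set \<Rightarrow> bool" where
  "face_order_embedding \<phi> P P' \<longleftrightarrow>
     \<phi> \<in> face_poset P \<rightarrow> face_poset P' \<and>
     (\<forall>x\<in>face_poset P. \<forall>y\<in>face_poset P. \<phi> x \<subseteq> \<phi> y \<longleftrightarrow> x \<subseteq> y)"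

lemma facet_of_imp_in_face_poset: "F facet_of P \<Longrightarrow> F \<in> face_poset P"
  by (auto simp: face_poset_def facet_of_def)

lemma face_poset_face_subset:
  assumes "F \<in> face_poset P"
  shows "face_poset F \<subseteq> face_poset P"
proof
  fix x assume x: "x \<in> face_poset F"
  have "x face_of P"
    using assms x face_of_trans by (auto simp: face_poset_def)
  moreover have "x \<noteq> P"
    using assms x face_of_imp_subset by (fastforce simp: face_poset_def)
  ultimately show "x \<in> face_poset P"
    using x by (simp add: face_poset_def)
qed

lemma face_poset_eq_empty:
  fixes P :: "'a::euclidean_space set"
  assumes "convex P" "aff_dim P \<le> 0"
  shows "face_poset P = {}"
proof -
  have "aff_dim x < 0" if "x face_of P" "x \<noteq> P" for x
    using face_of_aff_dim_lt[OF assms(1) that] assms(2) by linarith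
  then show ?thesis
    by (auto simp: face_poset_def)
qed

lemma face_poset_facet_cases:
  assumes "polyhedron P" "x \<in> face_poset P"
  obtains "x facet_of P" | F where "F facet_of P" "x \<in> face_poset F"
proof -
  have x: "x face_of P" "x \<noteq> {}" "x \<noteq> P"
    using assms(2) by (auto simp: face_poset_def)
  obtain F where F: "F facet_of P" "x \<subseteq> F"
    using face_of_polyhedron_subset_facet[OF assms(1) x] by blast
  moreover have "x face_of F"
    using face_of_subset[OF x(1) F(2) facet_of_imp_subset[OF F(1)]] .
  ultimately show thesis
    using that x(2) by (cases "x = F") (auto simp: face_poset_def)
qed

lemma face_of_polyhedron_subset_other_facet:
  assumes "polyhedron P" "x face_of P" "x \<noteq> {}" "F facet_of P" "x \<subseteq> F" "x \<noteq> F"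
  obtains F' where "F' facet_of P" "x \<subseteq> F'" "F' \<noteq> F"
proof (rule ccontr)
  assume "\<not> thesis"
  then have "{F'. F' facet_of P \<and> x \<subseteq> F'} = {F}"
    using that assms(4,5) by blast
  moreover have "x \<noteq> P"
    using assms(4-6) facet_of_imp_subset by blast
  ultimately have "x = F"
    using face_of_polyhedron[OF assms(1-3)] by simp
  then show False
    using assms(6) by contradiction
qed

lemma face_poset_segment:
  fixes P :: "'a::euclidean_space set"
  assumes "polytope P" "aff_dim P = 1"
  obtains a b where "a \<noteq> b" "face_poset P = {{a}, {b}}"
proof -
  obtain n where "n simplex P"
    by (rule polytope_lowdim_imp_simplex[OF assms(1)]) (simp add: assms(2))
  then have "1 simplex P"
    using aff_dim_simplex[OF \<open>n simplex P\<close>] assms(2) by simp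
  then obtain C where C: "\<not> affine_dependent C" "card C = 2" "P = convex hull C"
    by (auto simp: simplex_def)
  then obtain a b where "a \<noteq> b" and ab: "C = {a, b}"
    by (auto simp: card_2_iff)
  have P_eq: "P = convex hull {a, b}" and indep: "\<not> affine_dependent {a, b}"
    using C ab by simp_all
  have subsets: "c \<subseteq> {a, b} \<longleftrightarrow> c \<in> {{}, {a}, {b}, {a, b}}" for c
    by blast
  have "x face_of P \<longleftrightarrow> (\<exists>c\<in>{{}, {a}, {b}, {a, b}}. x = convex hull c)" for x
    unfolding P_eq face_of_convex_hull_affine_independent[OF indep] subsets by blast
  then have "x face_of P \<longleftrightarrow> x = {} \<or> x = {a} \<or> x = {b} \<or> x = P" for x
    using P_eq by simp
  moreover have "{a} \<noteq> P" "{b} \<noteq> P"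
    using assms(2) by auto
  ultimately have "face_poset P = {{a}, {b}}"
    by (auto simp: face_poset_def)
  then show thesis
    using that \<open>a \<noteq> b\<close> by blast
qed

lemma face_order_embedding_inj_on:
  assumes "face_order_embedding \<phi> P P'"
  shows "inj_on \<phi> (face_poset P)"
proof (rule inj_onI)
  fix x y assume "x \<in> face_poset P" "y \<in> face_poset P" "\<phi> x = \<phi> y"
  then have "x \<subseteq> y" "y \<subseteq> x"
    using assms unfolding face_order_embedding_def by (metis order_refl)+
  then show "x = y"
    by (rule subset_antisym)
qed

lemma face_order_embedding_restrict:
  assumes emb: "face_order_embedding \<phi> P P'" and F: "F \<in> face_poset P"
  shows "face_order_embedding \<phi> F (\<phi> F)"
  unfolding face_order_embedding_def
proof (intro conjI ballI Pi_I)
  fix x assume x: "x \<in> face_poset F"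
  then have xP: "x \<in> face_poset P"
    using face_poset_face_subset[OF F] by blast
  have "x \<subseteq> F" "x \<noteq> F"
    using x face_of_imp_subset by (auto simp: face_poset_def)
  then have "\<phi> x \<subseteq> \<phi> F" "\<phi> x \<noteq> \<phi> F"
    using emb F xP inj_onD[OF face_order_embedding_inj_on[OF emb]]
    by (auto simp: face_order_embedding_def)
  moreover have "\<phi> x face_of P'" "\<phi> x \<noteq> {}" "\<phi> F face_of P'"
    using emb F xP by (auto simp: face_order_embedding_def face_poset_def)
  ultimately show "\<phi> x \<in> face_poset (\<phi> F)"
    using face_of_subset[of "\<phi> x" P' "\<phi> F"] face_of_imp_subset[of "\<phi> F" P']
    by (simp add: face_poset_def)
next
  fix x y assume "x \<in> face_poset F" "y \<in> face_poset F"
  then have "x \<in> face_poset P" "y \<in> face_poset P"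
    using face_poset_face_subset[OF F] by blast+
  then show "\<phi> x \<subseteq> \<phi> y \<longleftrightarrow> x \<subseteq> y"
    using emb unfolding face_order_embedding_def by blast
qed

lemma face_order_embedding_facet:
  assumes "polytope P" "polytope P'" "aff_dim P' \<le> aff_dim P"
    and emb: "face_order_embedding \<phi> P P'" and F: "F facet_of P"
  shows "polytope F" "polytope (\<phi> F)" "aff_dim (\<phi> F) \<le> aff_dim F"
    and "face_order_embedding \<phi> F (\<phi> F)"
proof -
  have FP: "F \<in> face_poset P"
    using F by (rule facet_of_imp_in_face_poset)
  then have "\<phi> F face_of P'" "\<phi> F \<noteq> P'"
    using emb by (auto simp: face_order_embedding_def face_poset_def)
  then show "polytope (\<phi> F)" and "aff_dim (\<phi> F) \<le> aff_dim F"
    using assms face_of_polytope_polytope face_of_aff_dim_lt[OF polytope_imp_convex[OF assms(2)]]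
    by (fastforce simp: facet_of_def)+
  show "polytope F"
    using F assms(1) face_of_polytope_polytope facet_of_imp_face_of by blast
  show "face_order_embedding \<phi> F (\<phi> F)"
    using emb FP by (rule face_order_embedding_restrict)
qed

lemma face_order_embedding_segment:
  fixes P :: "'a::euclidean_space set" and P' :: "'b::euclidean_space set"
  assumes "polytope P" "polytope P'" "aff_dim P = 1" "aff_dim P' \<le> 1"
    and emb: "face_order_embedding \<phi> P P'"
  shows "bij_betw \<phi> (face_poset P) (face_poset P') \<and> (\<forall>x\<in>face_poset P. aff_dim (\<phi> x) = aff_dim x)"
proof -
  obtain a b where "a \<noteq> b" and L: "face_poset P = {{a}, {b}}"
    using face_poset_segment assms(1,3) by blast
  have into: "\<phi> ` face_poset P \<subseteq> face_poset P'"
    using emb by (auto simp: face_order_embedding_def)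
  then have "face_poset P' \<noteq> {}"
    using L by blast
  then have "\<not> aff_dim P' \<le> 0"
    using face_poset_eq_empty[OF polytope_imp_convex[OF assms(2)]] by blast
  then have "aff_dim P' = 1"
    using assms(4) by linarith
  then obtain a' b' where "a' \<noteq> b'" and L': "face_poset P' = {{a'}, {b'}}"
    by (rule face_poset_segment[OF assms(2)])
  have "card (\<phi> ` face_poset P) = 2"
    using card_image[OF face_order_embedding_inj_on[OF emb]] L \<open>a \<noteq> b\<close> by simp
  moreover have "card (face_poset P') = 2"
    using \<open>a' \<noteq> b'\<close> by (simp add: L')
  ultimately have "\<phi> ` face_poset P = face_poset P'"
    using into L' by (intro card_subset_eq) auto
  moreover have "\<forall>y\<in>face_poset P'. aff_dim y = 0" "\<forall>x\<in>face_poset P. aff_dim x = 0"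
    using L L' by auto
  ultimately show ?thesis
    using face_order_embedding_inj_on[OF emb] by (auto simp: bij_betw_def)
qed

locale face_order_embedding_step =
  fixes P :: "'a::euclidean_space set" and P' :: "'b::euclidean_space set"
    and \<phi> :: "'a set \<Rightarrow> 'b set"
  assumes P: "polytope P" and P': "polytope P'"
    and two_le_dim: "2 \<le> aff_dim P" and dim_le: "aff_dim P' \<le> aff_dim P"
    and embedding: "face_order_embedding \<phi> P P'"
    and on_facets: "\<And>F. F facet_of P \<Longrightarrow>
      bij_betw \<phi> (face_poset F) (face_poset (\<phi> F)) \<and> (\<forall>x\<in>face_poset F. aff_dim (\<phi> x) = aff_dim x)"
begin

lemma maps_into: "x \<in> face_poset P \<Longrightarrow> \<phi> x \<in> face_poset P'"
  using embedding by (auto simp: face_order_embedding_def)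

lemma order_reflecting: "x \<in> face_poset P \<Longrightarrow> y \<in> face_poset P \<Longrightarrow> \<phi> x \<subseteq> \<phi> y \<longleftrightarrow> x \<subseteq> y"
  using embedding by (auto simp: face_order_embedding_def)

lemma inj_on_face_poset: "inj_on \<phi> (face_poset P)"
  using embedding by (rule face_order_embedding_inj_on)

lemma image_face_poset_facet: "F facet_of P \<Longrightarrow> \<phi> ` face_poset F = face_poset (\<phi> F)"
  using on_facets by (simp add: bij_betw_def)

lemma aff_dim_image_lt: "x \<in> face_poset P \<Longrightarrow> aff_dim (\<phi> x) < aff_dim P'"
  using maps_into face_of_aff_dim_lt[OF polytope_imp_convex[OF P']] by (auto simp: face_poset_def)

lemma aff_dim_facet_image:
  assumes F: "F facet_of P"
  shows "aff_dim (\<phi> F) = aff_dim P - 1" "aff_dim P' = aff_dim P"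
proof -
  have "polytope F" and dim_F: "aff_dim F = aff_dim P - 1"
    using F P face_of_polytope_polytope by (auto simp: facet_of_def)
  obtain x where x: "x facet_of F"
    by (rule polytope_facet_exists[OF \<open>polytope F\<close>]) (use dim_F two_le_dim in simp)
  then have "\<phi> x \<in> face_poset (\<phi> F)" "aff_dim (\<phi> x) = aff_dim P - 2"
    using on_facets[OF F] facet_of_imp_in_face_poset[OF x] dim_F
    by (auto simp: bij_betw_def facet_of_def)
  moreover have "convex (\<phi> F)"
    using maps_into[OF facet_of_imp_in_face_poset[OF F]] face_of_imp_convex
    by (auto simp: face_poset_def)
  ultimately have "aff_dim P - 2 < aff_dim (\<phi> F)"
    using face_of_aff_dim_lt by (fastforce simp: face_poset_def)
  moreover have "aff_dim (\<phi> F) < aff_dim P'"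
    using aff_dim_image_lt[OF facet_of_imp_in_face_poset[OF F]] .
  ultimately show "aff_dim (\<phi> F) = aff_dim P - 1" "aff_dim P' = aff_dim P"
    using dim_le by linarith+
qed

lemma facet_exists: obtains F where "F facet_of P"
  by (rule polytope_facet_exists[OF P]) (use two_le_dim in simp)

lemma aff_dim_eq: "aff_dim P' = aff_dim P"
  using facet_exists aff_dim_facet_image(2) by metis

lemma facet_image: "F facet_of P \<Longrightarrow> \<phi> F facet_of P'"
  using maps_into[OF facet_of_imp_in_face_poset] aff_dim_facet_image aff_dim_eq
  by (auto simp: face_poset_def facet_of_def)

lemma aff_dim_image:
  assumes "x \<in> face_poset P"
  shows "aff_dim (\<phi> x) = aff_dim x"
  using polytope_imp_polyhedron[OF P] assms
proof (cases rule: face_poset_facet_cases)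
  case 1
  then show ?thesis
    using aff_dim_facet_image(1) by (simp add: facet_of_def)
next
  case (2 F)
  then show ?thesis
    using on_facets by blast
qed

lemma ridge_neighbour_in_image:
  assumes F: "F facet_of P" and G: "G facet_of P'" and ridge: "aff_dim (\<phi> F \<inter> G) = aff_dim P' - 2"
  shows "G \<in> \<phi> ` {F. F facet_of P}"
proof (rule ccontr)
  assume G_notin: "G \<notin> \<phi> ` {F. F facet_of P}"
  define R where "R = \<phi> F \<inter> G"
  have "R \<noteq> {}"
    using ridge two_le_dim aff_dim_eq by (auto simp: R_def)
  moreover have "R face_of \<phi> F"
    unfolding R_def using facet_image[OF F] G face_of_Int face_of_subset
    by (metis facet_of_imp_face_of facet_of_imp_subset inf_le1)
  moreover have "R \<noteq> \<phi> F"
    using ridge aff_dim_facet_image(1)[OF F] aff_dim_eq by (auto simp: R_def)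
  ultimately have "R \<in> \<phi> ` face_poset F"
    unfolding image_face_poset_facet[OF F] by (simp add: face_poset_def)
  then obtain r where r: "r \<in> face_poset F" "\<phi> r = R"
    by blast
  have rP: "r \<in> face_poset P"
    using r(1) face_poset_face_subset[OF facet_of_imp_in_face_poset[OF F]] by blast
  have "aff_dim r = aff_dim (\<phi> r)"
    using on_facets[OF F] r(1) by simp
  then have "aff_dim r = aff_dim P - 2"
    using r(2) ridge aff_dim_eq by (simp add: R_def)
  then have "r \<noteq> F"
    using F by (auto simp: facet_of_def)
  moreover have "r face_of P" "r \<noteq> {}" "r \<subseteq> F"
    using rP r(1) face_of_imp_subset by (auto simp: face_poset_def)
  ultimately obtain F2 where F2: "F2 facet_of P" "r \<subseteq> F2" "F2 \<noteq> F"
    using face_of_polyhedron_subset_other_facet[OF polytope_imp_polyhedron[OF P] _ _ F] by blast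
  have "R \<subseteq> \<phi> F2"
    using order_reflecting[OF rP facet_of_imp_in_face_poset[OF F2(1)]] F2(2) r(2) by simp
  moreover have "\<phi> F2 \<noteq> \<phi> F"
    using inj_onD[OF inj_on_face_poset] F2 F facet_of_imp_in_face_poset by metis
  moreover have "\<phi> F \<noteq> G" "\<phi> F2 \<noteq> G"
    using G_notin F F2(1) by auto
  ultimately show False
    using ridge_in_at_most_two_facets[OF polytope_imp_polyhedron[OF P'] \<open>R \<noteq> {}\<close> _
        facet_image[OF F] G facet_image[OF F2(1)]] ridge
    by (auto simp: R_def)
qed

lemma image_facets: "\<phi> ` {F. F facet_of P} = {G. G facet_of P'}"
proof (rule facets_ridge_connected[OF P'])
  show "2 \<le> aff_dim P'"
    using two_le_dim aff_dim_eq by simp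
  show "\<phi> ` {F. F facet_of P} \<subseteq> {G. G facet_of P'}"
    using facet_image by blast
  show "\<phi> ` {F. F facet_of P} \<noteq> {}"
    using facet_exists by blast
qed (auto intro: ridge_neighbour_in_image)

lemma image_face_poset: "\<phi> ` face_poset P = face_poset P'"
proof
  show "\<phi> ` face_poset P \<subseteq> face_poset P'"
    using maps_into by blast
next
  show "face_poset P' \<subseteq> \<phi> ` face_poset P"
  proof
    fix y assume y: "y \<in> face_poset P'"
    with polytope_imp_polyhedron[OF P'] show "y \<in> \<phi> ` face_poset P"
    proof (cases rule: face_poset_facet_cases)
      case 1
      then show ?thesis
        using image_facets facet_of_imp_in_face_poset by blast
    next
      case (2 G)
      then obtain F where "F facet_of P" "G = \<phi> F"
        using image_facets by blast
      then show ?thesis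
        using 2 image_face_poset_facet face_poset_face_subset[OF facet_of_imp_in_face_poset] by blast
    qed
  qed
qed

end

lemma face_order_embedding_bij_betw:
  fixes P :: "'a::euclidean_space set" and P' :: "'b::euclidean_space set"
  assumes "polytope P" "polytope P'" "aff_dim P' \<le> aff_dim P" "face_order_embedding \<phi> P P'"
  shows "bij_betw \<phi> (face_poset P) (face_poset P') \<and> (\<forall>x\<in>face_poset P. aff_dim (\<phi> x) = aff_dim x)"
  using assms
proof (induction "nat (aff_dim P)" arbitrary: P P' \<phi> rule: less_induct)
  case less
  consider "aff_dim P \<le> 0" | "aff_dim P = 1" | "2 \<le> aff_dim P"
    by linarith
  then show ?case
  proof cases
    case 1
    moreover have "aff_dim P' \<le> 0"
      using 1 less.prems(3) by linarith
    ultimately have "face_poset P = {}" "face_poset P' = {}"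
      using face_poset_eq_empty polytope_imp_convex less.prems(1,2) by blast+
    then show ?thesis
      by (simp add: bij_betw_def)
  next
    case 2
    then show ?thesis
      using less.prems face_order_embedding_segment by simp
  next
    case 3
    interpret face_order_embedding_step P P' \<phi>
    proof (unfold_locales)
      fix F assume F: "F facet_of P"
      then have "nat (aff_dim F) < nat (aff_dim P)"
        using 3 by (simp add: facet_of_def)
      then show "bij_betw \<phi> (face_poset F) (face_poset (\<phi> F)) \<and>
          (\<forall>x\<in>face_poset F. aff_dim (\<phi> x) = aff_dim x)"
        using less.hyps face_order_embedding_facet[OF less.prems F] by blast
    qed (use less.prems 3 in auto)
    show ?thesis
      using inj_on_face_poset image_face_poset aff_dim_image by (simp add: bij_betw_def)
  qed
qed

theorem lemma3p3:
  fixes P :: "'a::euclidean_space set" and P' :: "'b::euclidean_space set"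
    and \<phi> :: "'a set \<Rightarrow> 'b set"
  assumes "polytope P" and "polytope P'"
    and "aff_dim P \<ge> aff_dim P'"
    and "\<phi> \<in> face_poset P \<rightarrow> face_poset P'"
    and "\<And>x y. x \<in> face_poset P \<Longrightarrow> y \<in> face_poset P \<Longrightarrow> (\<phi> x \<subseteq> \<phi> y \<longleftrightarrow> x \<subseteq> y)"
  shows "bij_betw \<phi> (face_poset P) (face_poset P')"
  using face_order_embedding_bij_betw[of P P' \<phi>] assms
  by (simp add: face_order_embedding_def)

end
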